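(* Let $\Lambda$ be a finite set and let $Q=(q(x,y))_{x,y\in\Lambda\cup\{0\}}$ be the rate matrix of an irreducible continuous-time Markov jump process on $\Lambda\cup\{0\}$. For $N\ge2$ let $(\xi_t)_{t\ge0}$ be the Fleming–Viot process on $\Lambda^N$ with generator $$\mathcal{L}^N f(\xi)=\sum_{i=1}^N\sum_{x\in\Lambda\setminus\{\xi(i)\}}\Bigl[q(\xi(i),x)+q(\xi(i),0)\frac{\sum_{j\ne i}\mathbf 1_{\{\xi(j)=x\}}}{N-1}\Bigr]\bigl(f(\xi^{i,x})-f(\xi)\bigr),$$ ($\xi^{i,x}(i)=x$, $\xi^{i,x}(j)=\xi(j)$ for $j\ne i$), and let $\mathbb E^N_\xi$ denote expectation for the process started at $\xi$. Let $m(\xi)=\frac1N\sum_{i=1}^N\delta_{\xi(i)}$ be the empirical measure, and for a probability measure $\mu$ on $\Lambda$ let $$T_t\mu(x)=\frac{\sum_{y\in\Lambda}\mu(y)\exp(tQ)(y,x)}{1-\sum_{y\in\Lambda}\mu(y)\exp(tQ)(y,0)},\quad x\in\Lambda.$$ Then for any $T>0$, $$\lim_{N\to\infty}\max_{0\le t\le T}\max_{\xi\in\Lambda^N}\bigl\|\mathbb E^N_\xi[m(\xi_t)]-T_tm(\xi)\bigr\|_2=0,$$ where $\|\varphi\|_2=\bigl(\sum_{x\in\Lambda}\varphi(x)^2\bigr)^{1/2}$ and $\mathbb E^N_\xi[m(\xi_t)]$ denotes the vector $(\mathbb E^N_\xi[m(\xi_t)(x)])_{x\in\Lambda}$.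
   Context: In the Fleming–Viot process, $N$ particles move independently in $\Lambda$ with rates $Q$, except that when a particle attempts to jump to $0$ it instead jumps instantaneously to the position of one of the other particles chosen uniformly at random. $T_t\mu$ is the law at time $t$ of the $Q$-process started from $\mu$, conditioned on not having hit $0$ by time $t$. *)

theory Defs
  imports "HOL-Analysis.Analysis"
begin

text \<open>The state 0 is encoded as None, a state x of Lambda as Some x; Lambda is a finite type 'a.\<close>

definition semigroup :: "real \<Rightarrow> (('s \<Rightarrow> real) \<Rightarrow> ('s \<Rightarrow> real)) \<Rightarrow> ('s \<Rightarrow> real) \<Rightarrow> 's \<Rightarrow> real" where
  "semigroup t A f s = (\<Sum>k. t ^ k / fact k * (A ^^ k) f s)"

definition Qop :: "('a::finite option \<Rightarrow> 'a option \<Rightarrow> real) \<Rightarrow> ('a option \<Rightarrow> real) \<Rightarrow> 'a option \<Rightarrow> real" where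
  "Qop q g y = (\<Sum>z\<in>UNIV. q y z * g z)"

definition expQ :: "('a::finite option \<Rightarrow> 'a option \<Rightarrow> real) \<Rightarrow> real \<Rightarrow> 'a option \<Rightarrow> 'a option \<Rightarrow> real" where
  "expQ q t y z = semigroup t (Qop q) (\<lambda>w. if w = z then 1 else 0) y"

definition rate_matrix :: "('s::finite \<Rightarrow> 's \<Rightarrow> real) \<Rightarrow> bool" where
  "rate_matrix q \<longleftrightarrow> (\<forall>x y. x \<noteq> y \<longrightarrow> q x y \<ge> 0) \<and> (\<forall>x. (\<Sum>y\<in>UNIV. q x y) = 0)"

text \<open>Irreducibility of the process on Lambda (killed at the absorbing cemetery 0).\<close>
definition irreducible_on_Lambda :: "('a::finite option \<Rightarrow> 'a option \<Rightarrow> real) \<Rightarrow> bool" where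
  "irreducible_on_Lambda q \<longleftrightarrow>
     (\<forall>x y. (x, y) \<in> {(a, b). a \<noteq> b \<and> q (Some a) (Some b) > 0}\<^sup>*)"

definition configs :: "nat \<Rightarrow> (nat \<Rightarrow> 'a) set" where
  "configs N = PiE {..<N} (\<lambda>_. UNIV)"

definition FV_gen :: "('a::finite option \<Rightarrow> 'a option \<Rightarrow> real) \<Rightarrow> nat \<Rightarrow>
    ((nat \<Rightarrow> 'a) \<Rightarrow> real) \<Rightarrow> (nat \<Rightarrow> 'a) \<Rightarrow> real" where
  "FV_gen q N f \<xi> = (\<Sum>i<N. \<Sum>x\<in>UNIV - {\<xi> i}.
      (q (Some (\<xi> i)) (Some x) + q (Some (\<xi> i)) None *
         (real (card {j\<in>{..<N}. j \<noteq> i \<and> \<xi> j = x}) / (real N - 1)))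
      * (f (\<xi>(i := x)) - f \<xi>))"

definition emp :: "nat \<Rightarrow> (nat \<Rightarrow> 'a) \<Rightarrow> 'a \<Rightarrow> real" where
  "emp N \<xi> x = real (card {i\<in>{..<N}. \<xi> i = x}) / real N"

text \<open>E^N_xi[m(xi_t)(x)] = (exp(t L^N) (m(.)(x)))(xi).\<close>
definition FV_mean :: "('a::finite option \<Rightarrow> 'a option \<Rightarrow> real) \<Rightarrow> nat \<Rightarrow> real \<Rightarrow> (nat \<Rightarrow> 'a) \<Rightarrow> 'a \<Rightarrow> real" where
  "FV_mean q N t \<xi> x = semigroup t (FV_gen q N) (\<lambda>\<eta>. emp N \<eta> x) \<xi>"

definition Tt :: "('a::finite option \<Rightarrow> 'a option \<Rightarrow> real) \<Rightarrow> real \<Rightarrow> ('a \<Rightarrow> real) \<Rightarrow> 'a \<Rightarrow> real" where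
  "Tt q t \<mu> x = (\<Sum>y\<in>UNIV. \<mu> y * expQ q t (Some y) (Some x))
                / (1 - (\<Sum>y\<in>UNIV. \<mu> y * expQ q t (Some y) None))"

definition norm2 :: "('a::finite \<Rightarrow> real) \<Rightarrow> real" where
  "norm2 \<phi> = sqrt (\<Sum>x\<in>UNIV. (\<phi> x)\<^sup>2)"

end

theory Submission
  imports Defs
begin

text \<open>Fix \<open>x\<close> and let \<open>\<alpha>\<^sub>r y\<close> be the probability that the chain started at \<open>y\<close> is at \<open>x\<close> at time
  \<open>r\<close>, and \<open>\<beta>\<^sub>r y\<close> the probability that it has not been killed by time \<open>r\<close>. The function
  \<open>G\<^sub>r \<eta> = (\<Sum>\<^sub>i \<alpha>\<^sub>r (\<eta> i)) / (\<Sum>\<^sub>i \<beta>\<^sub>r (\<eta> i))\<close> satisfies \<open>G\<^sub>r \<xi> = T\<^sub>r m(\<xi>)(x)\<close> and \<open>G\<^sub>0 \<eta> = m(\<eta>)(x)\<close>.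
  Applying the Fleming-Viot generator to \<open>G\<^sub>r\<close> reproduces \<open>\<partial>\<^sub>r G\<^sub>r\<close> up to an error \<open>O(1/N)\<close>:
  killing followed by relocation onto another particle is exactly the renormalisation in
  \<open>T\<^sub>r\<close>, except for a self-interaction term, and the second-order part of each jump of the ratio is
  \<open>O(1/N\<^sup>2)\<close> because the denominator is at least \<open>N exp (- c r)\<close>. Since \<open>exp (t L\<^sup>N)\<close> is a
  contraction in the supremum norm, Duhamel's principle bounds
  \<open>\<bar>E\<^sub>\<xi>[m(\<xi>\<^sub>t)(x)] - T\<^sub>t m(\<xi>)(x)\<bar>\<close> by \<open>T \<cdot> O(1/N)\<close> uniformly in \<open>\<xi>\<close> and \<open>t \<le> T\<close>.\<close>

section \<open>Semigroups generated by linear operators on a finite set\<close>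

definition delta :: "'b \<Rightarrow> 'b \<Rightarrow> real" where
  "delta y x = (if x = y then 1 else 0)"

definition shift :: "real \<Rightarrow> (('b \<Rightarrow> real) \<Rightarrow> 'b \<Rightarrow> real) \<Rightarrow> ('b \<Rightarrow> real) \<Rightarrow> 'b \<Rightarrow> real" where
  "shift c A h z = A h z + c * h z"

locale finite_linop =
  fixes S :: "'b set" and A :: "('b \<Rightarrow> real) \<Rightarrow> 'b \<Rightarrow> real"
  assumes finite_S: "finite S"
    and additive: "\<And>f g. A (\<lambda>x. f x + g x) = (\<lambda>x. A f x + A g x)"
    and homogeneous: "\<And>c f. A (\<lambda>x. c * f x) = (\<lambda>x. c * A f x)"
    and depends_on_S: "\<And>f g x. (\<And>y. y \<in> S \<Longrightarrow> f y = g y) \<Longrightarrow> x \<in> S \<Longrightarrow> A f x = A g x"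
begin

lemma apply_zero: "A (\<lambda>_. 0) = (\<lambda>_. 0)"
  using homogeneous[of 0 "\<lambda>_. 0"] by simp

lemma apply_sum: "finite I \<Longrightarrow> A (\<lambda>x. \<Sum>i\<in>I. f i x) = (\<lambda>x. \<Sum>i\<in>I. A (f i) x)"
proof (induction I rule: finite_induct)
  case empty then show ?case using apply_zero by simp
next
  case (insert a I)
  then show ?case using additive[of "f a" "\<lambda>x. \<Sum>i\<in>I. f i x"] by simp
qed

lemma apply_eq_matrix: "x \<in> S \<Longrightarrow> A f x = (\<Sum>y\<in>S. f y * A (delta y) x)"
proof -
  assume x: "x \<in> S"
  have "A f x = A (\<lambda>z. \<Sum>y\<in>S. f y * delta y z) x"
    by (rule depends_on_S[OF _ x]) (simp add: delta_def finite_S if_distrib cong: if_cong)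
  also have "\<dots> = (\<Sum>y\<in>S. f y * A (delta y) x)"
    using apply_sum[OF finite_S, of "\<lambda>y z. f y * delta y z"] homogeneous by simp
  finally show ?thesis .
qed

lemma finite_linop_funpow: "finite_linop S (A ^^ k)"
proof (induction k)
  case 0 then show ?case by (simp add: finite_linop_def finite_S)
next
  case (Suc k)
  interpret Ak: finite_linop S "A ^^ k" by (fact Suc)
  have unfold: "(A ^^ Suc k) f = A ((A ^^ k) f)" for f by simp
  show ?case
  proof
    fix f g :: "'b \<Rightarrow> real"
    show "(A ^^ Suc k) (\<lambda>x. f x + g x) = (\<lambda>x. (A ^^ Suc k) f x + (A ^^ Suc k) g x)"
      unfolding unfold Ak.additive additive ..
  next
    fix c and f :: "'b \<Rightarrow> real"
    show "(A ^^ Suc k) (\<lambda>x. c * f x) = (\<lambda>x. c * (A ^^ Suc k) f x)"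
      unfolding unfold Ak.homogeneous homogeneous ..
  next
    fix f g :: "'b \<Rightarrow> real" and x
    assume "\<And>y. y \<in> S \<Longrightarrow> f y = g y" and "x \<in> S"
    then show "(A ^^ Suc k) f x = (A ^^ Suc k) g x"
      unfolding unfold by (intro depends_on_S Ak.depends_on_S)
  qed (fact finite_S)
qed

lemma finite_linop_shift: "finite_linop S (shift c A)"
proof
  fix f g :: "'b \<Rightarrow> real"
  show "shift c A (\<lambda>x. f x + g x) = (\<lambda>x. shift c A f x + shift c A g x)"
    by (rule ext) (simp add: shift_def additive algebra_simps)
next
  fix d and f :: "'b \<Rightarrow> real"
  show "shift c A (\<lambda>x. d * f x) = (\<lambda>x. d * shift c A f x)"
    by (rule ext) (simp add: shift_def homogeneous algebra_simps)
next
  fix f g :: "'b \<Rightarrow> real" and x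
  assume fg: "\<And>y. y \<in> S \<Longrightarrow> f y = g y" and x: "x \<in> S"
  then show "shift c A f x = shift c A g x"
    unfolding shift_def using depends_on_S[OF fg x] by simp
qed (fact finite_S)

definition l1_norm :: "('b \<Rightarrow> real) \<Rightarrow> real" where
  "l1_norm f = (\<Sum>y\<in>S. \<bar>f y\<bar>)"

definition op_bound :: real where
  "op_bound = (\<Sum>x\<in>S. \<Sum>y\<in>S. \<bar>A (delta y) x\<bar>)"

lemma abs_le_l1_norm: "x \<in> S \<Longrightarrow> \<bar>f x\<bar> \<le> l1_norm f"
  unfolding l1_norm_def by (rule member_le_sum) (auto simp: finite_S)

lemma l1_norm_apply_le: "l1_norm (A f) \<le> op_bound * l1_norm f"
proof -
  have "l1_norm (A f) = (\<Sum>x\<in>S. \<bar>\<Sum>y\<in>S. f y * A (delta y) x\<bar>)"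
    unfolding l1_norm_def by (intro sum.cong refl arg_cong[where f=abs] apply_eq_matrix)
  also have "\<dots> \<le> (\<Sum>x\<in>S. \<Sum>y\<in>S. l1_norm f * \<bar>A (delta y) x\<bar>)"
  proof (intro sum_mono)
    fix x assume "x \<in> S"
    have "\<bar>\<Sum>y\<in>S. f y * A (delta y) x\<bar> \<le> (\<Sum>y\<in>S. \<bar>f y * A (delta y) x\<bar>)" by (rule sum_abs)
    also have "\<dots> \<le> (\<Sum>y\<in>S. l1_norm f * \<bar>A (delta y) x\<bar>)"
      by (rule sum_mono) (auto simp: abs_mult intro!: mult_right_mono abs_le_l1_norm)
    finally show "\<bar>\<Sum>y\<in>S. f y * A (delta y) x\<bar> \<le> (\<Sum>y\<in>S. l1_norm f * \<bar>A (delta y) x\<bar>)" .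
  qed
  also have "\<dots> = op_bound * l1_norm f"
    by (simp add: op_bound_def sum_distrib_left sum_distrib_right mult.commute)
  finally show ?thesis .
qed

lemma abs_funpow_apply_le:
  assumes "x \<in> S"
  shows "\<bar>(A ^^ k) f x\<bar> \<le> op_bound ^ k * l1_norm f"
proof -
  have "l1_norm ((A ^^ k) f) \<le> op_bound ^ k * l1_norm f"
  proof (induction k)
    case (Suc k)
    have "op_bound \<ge> 0" unfolding op_bound_def by (auto intro!: sum_nonneg)
    then have "op_bound * l1_norm ((A ^^ k) f) \<le> op_bound * (op_bound ^ k * l1_norm f)"
      using Suc by (rule mult_left_mono[rotated])
    then show ?case using l1_norm_apply_le[of "(A ^^ k) f"] by simp
  qed simp
  then show ?thesis using abs_le_l1_norm[OF assms, of "(A ^^ k) f"] by linarith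
qed

lemma summable_norm_semigroup_terms:
  assumes x: "x \<in> S"
  shows "summable (\<lambda>k. norm (t ^ k / fact k * (A ^^ k) f x))"
proof (rule summable_comparison_test')
  show "summable (\<lambda>k. l1_norm f * (inverse (fact k) * (\<bar>t\<bar> * op_bound) ^ k))"
    by (intro summable_mult summable_exp)
  fix k :: nat
  have "norm (t ^ k / fact k * (A ^^ k) f x) = \<bar>t\<bar> ^ k / fact k * \<bar>(A ^^ k) f x\<bar>"
    by (simp add: abs_mult flip: power_abs)
  also have "\<dots> \<le> \<bar>t\<bar> ^ k / fact k * (op_bound ^ k * l1_norm f)"
    by (rule mult_left_mono[OF abs_funpow_apply_le[OF x]]) simp
  also have "\<dots> = l1_norm f * (inverse (fact k) * (\<bar>t\<bar> * op_bound) ^ k)"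
    by (simp add: power_mult_distrib divide_inverse)
  finally show "norm (norm (t ^ k / fact k * (A ^^ k) f x))
      \<le> l1_norm f * (inverse (fact k) * (\<bar>t\<bar> * op_bound) ^ k)" by simp
qed

lemma summable_semigroup_terms: "x \<in> S \<Longrightarrow> summable (\<lambda>k. t ^ k / fact k * (A ^^ k) f x)"
  by (rule summable_norm_cancel[OF summable_norm_semigroup_terms])

lemma semigroup_eq_matrix:
  assumes x: "x \<in> S"
  shows "semigroup t A f x = (\<Sum>y\<in>S. f y * semigroup t A (delta y) x)"
proof -
  have "semigroup t A f x = (\<Sum>k. \<Sum>y\<in>S. f y * (t ^ k / fact k * (A ^^ k) (delta y) x))"
    unfolding semigroup_def
  proof (rule suminf_cong)
    fix k
    interpret Ak: finite_linop S "A ^^ k" by (rule finite_linop_funpow)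
    show "t ^ k / fact k * (A ^^ k) f x = (\<Sum>y\<in>S. f y * (t ^ k / fact k * (A ^^ k) (delta y) x))"
      using Ak.apply_eq_matrix[OF x, of f] by (simp add: sum_distrib_left mult.left_commute)
  qed
  also have "\<dots> = (\<Sum>y\<in>S. \<Sum>k. f y * (t ^ k / fact k * (A ^^ k) (delta y) x))"
    by (rule suminf_sum) (intro summable_mult summable_semigroup_terms x)
  also have "\<dots> = (\<Sum>y\<in>S. f y * semigroup t A (delta y) x)"
    unfolding semigroup_def by (intro sum.cong refl suminf_mult summable_semigroup_terms x)
  finally show ?thesis .
qed

lemma semigroup_at_0: "semigroup 0 A f x = f x"
proof -
  have "semigroup 0 A f x = (\<Sum>k. ((A ^^ k) f x / fact k) * 0 ^ k)"
    unfolding semigroup_def by (rule suminf_cong) (simp add: field_simps)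
  also have "\<dots> = f x" by (subst powser_zero) simp
  finally show ?thesis .
qed

lemma semigroup_has_derivative:
  assumes x: "x \<in> S"
  shows "((\<lambda>t. semigroup t A f x) has_real_derivative semigroup t A (A f) x) (at t)"
proof -
  define c where "c k = (A ^^ k) f x / fact k" for k
  have "(\<lambda>t. semigroup t A f x) = (\<lambda>t. \<Sum>k. c k * t ^ k)"
    unfolding semigroup_def c_def by (intro ext suminf_cong) (simp add: field_simps)
  moreover have "semigroup t A (A f) x = (\<Sum>k. diffs c k * t ^ k)"
    unfolding semigroup_def c_def diffs_def
  proof (rule suminf_cong)
    fix k
    have "fact (Suc k) = of_nat (Suc k) * (fact k :: real)" by (simp del: of_nat_Suc)
    moreover have "(A ^^ k) (A f) = (A ^^ Suc k) f" by (simp add: funpow_swap1)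
    ultimately show "t ^ k / fact k * (A ^^ k) (A f) x
        = of_nat (Suc k) * ((A ^^ Suc k) f x / fact (Suc k)) * t ^ k"
      by (simp add: field_simps del: funpow.simps of_nat_Suc fact_Suc)
  qed
  moreover have "summable (\<lambda>k. c k * y ^ k)" for y
    using summable_semigroup_terms[OF x, of y f]
    unfolding c_def by (rule summable_cong[THEN iffD1, rotated]) (simp add: field_simps)
  ultimately show ?thesis by (simp add: termdiffs_strong_converges_everywhere)
qed

lemma apply_semigroup:
  assumes x: "x \<in> S"
  shows "A (semigroup t A f) x = semigroup t A (A f) x"
proof -
  have summable_term: "summable (\<lambda>k. t ^ k / fact k * ((A ^^ k) f y * A (delta y) x))" if "y \<in> S" for y
    using summable_mult2[OF summable_semigroup_terms[OF that, of t f], of "A (delta y) x"]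
    by (simp add: mult.assoc)
  have "A (semigroup t A f) x = (\<Sum>y\<in>S. semigroup t A f y * A (delta y) x)"
    by (rule apply_eq_matrix[OF x])
  also have "\<dots> = (\<Sum>y\<in>S. \<Sum>k. t ^ k / fact k * ((A ^^ k) f y * A (delta y) x))"
    unfolding semigroup_def
    by (intro sum.cong refl) (use suminf_mult2[OF summable_semigroup_terms] in \<open>simp add: mult.assoc\<close>)
  also have "\<dots> = (\<Sum>k. \<Sum>y\<in>S. t ^ k / fact k * ((A ^^ k) f y * A (delta y) x))"
    by (rule suminf_sum[symmetric]) (rule summable_term)
  also have "\<dots> = (\<Sum>k. t ^ k / fact k * A ((A ^^ k) f) x)"
    using apply_eq_matrix[OF x, of "(A ^^ _) f"] by (simp add: sum_distrib_left)
  also have "\<dots> = semigroup t A (A f) x"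
    unfolding semigroup_def by (simp add: funpow_swap1)
  finally show ?thesis .
qed

lemma semigroup_backward_has_derivative:
  assumes x: "x \<in> S"
    and dG: "\<And>\<eta>. \<eta> \<in> S \<Longrightarrow> ((\<lambda>r. G r \<eta>) has_real_derivative G' (t - s) \<eta>) (at (t - s))"
  shows "((\<lambda>s. semigroup s A (G (t - s)) x) has_real_derivative
           semigroup s A (\<lambda>y. A (G (t - s)) y - G' (t - s) y) x) (at s)"
proof -
  define p where "p s \<eta> = semigroup s A (delta \<eta>) x" for s \<eta>
  have p_deriv: "((\<lambda>s. p s \<eta>) has_real_derivative (\<Sum>\<zeta>\<in>S. A (delta \<eta>) \<zeta> * p s \<zeta>)) (at s)" for \<eta>
    unfolding p_def
    by (rule DERIV_cong[OF semigroup_has_derivative[OF x]]) (rule semigroup_eq_matrix[OF x])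
  have G_deriv: "((\<lambda>s. G (t - s) \<eta>) has_real_derivative - G' (t - s) \<eta>) (at s)" if "\<eta> \<in> S" for \<eta>
    using DERIV_chain2[OF dG[OF that] DERIV_diff[OF DERIV_const[of t] DERIV_ident]] by simp
  have "(\<lambda>s. semigroup s A (G (t - s)) x) = (\<lambda>s. \<Sum>\<eta>\<in>S. G (t - s) \<eta> * p s \<eta>)"
    unfolding p_def by (intro ext semigroup_eq_matrix[OF x])
  moreover have "((\<lambda>s. \<Sum>\<eta>\<in>S. G (t - s) \<eta> * p s \<eta>) has_real_derivative
      (\<Sum>\<eta>\<in>S. - G' (t - s) \<eta> * p s \<eta> + (\<Sum>\<zeta>\<in>S. A (delta \<eta>) \<zeta> * p s \<zeta>) * G (t - s) \<eta>)) (at s)"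
    by (intro DERIV_sum DERIV_mult G_deriv p_deriv) (simp add: mult.commute)
  moreover have "(\<Sum>\<eta>\<in>S. - G' (t - s) \<eta> * p s \<eta> + (\<Sum>\<zeta>\<in>S. A (delta \<eta>) \<zeta> * p s \<zeta>) * G (t - s) \<eta>)
      = (\<Sum>\<zeta>\<in>S. (A (G (t - s)) \<zeta> - G' (t - s) \<zeta>) * p s \<zeta>)"
  proof -
    have "(\<Sum>\<eta>\<in>S. (\<Sum>\<zeta>\<in>S. A (delta \<eta>) \<zeta> * p s \<zeta>) * G (t - s) \<eta>)
        = (\<Sum>\<eta>\<in>S. \<Sum>\<zeta>\<in>S. G (t - s) \<eta> * A (delta \<eta>) \<zeta> * p s \<zeta>)"
      by (simp add: sum_distrib_left sum_distrib_right mult_ac)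
    also have "\<dots> = (\<Sum>\<zeta>\<in>S. \<Sum>\<eta>\<in>S. G (t - s) \<eta> * A (delta \<eta>) \<zeta> * p s \<zeta>)"
      by (rule sum.swap)
    also have "\<dots> = (\<Sum>\<zeta>\<in>S. A (G (t - s)) \<zeta> * p s \<zeta>)"
      using apply_eq_matrix[of _ "G (t - s)"] by (simp add: sum_distrib_right)
    finally show ?thesis by (simp add: sum.distrib algebra_simps sum_subtractf)
  qed
  moreover have "semigroup s A (\<lambda>y. A (G (t - s)) y - G' (t - s) y) x
      = (\<Sum>\<zeta>\<in>S. (A (G (t - s)) \<zeta> - G' (t - s) \<zeta>) * p s \<zeta>)"
    unfolding p_def by (rule semigroup_eq_matrix[OF x])
  ultimately show ?thesis by simp
qed

end

lemma pascal_sum_step: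
  fixes T :: "nat \<Rightarrow> 'a::comm_semiring_1"
  shows "(\<Sum>j\<le>k. of_nat (k choose j) * c ^ (k - j) * (T (Suc j) + c * T j))
       = (\<Sum>j\<le>Suc k. of_nat (Suc k choose j) * c ^ (Suc k - j) * T j)"
proof -
  have "(\<Sum>j\<le>k. of_nat (k choose j) * c ^ (k - j) * (T (Suc j) + c * T j))
      = (\<Sum>j\<le>k. of_nat (k choose j) * c ^ (k - j) * T (Suc j))
        + (\<Sum>j\<le>k. of_nat (k choose j) * c ^ (Suc k - j) * T j)"
    by (simp add: sum.distrib distrib_left Suc_diff_le mult.assoc mult.left_commute)
  also have "(\<Sum>j\<le>k. of_nat (k choose j) * c ^ (Suc k - j) * T j)
      = c ^ Suc k * T 0 + (\<Sum>j\<le>k. of_nat (k choose Suc j) * c ^ (k - j) * T (Suc j))"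
  proof -
    have "(\<Sum>j\<le>k. of_nat (k choose j) * c ^ (Suc k - j) * T j)
        = (\<Sum>j\<le>Suc k. of_nat (k choose j) * c ^ (Suc k - j) * T j)"
      by (simp add: binomial_eq_0)
    then show ?thesis by (simp add: sum.atMost_Suc_shift del: sum.atMost_Suc)
  qed
  finally show ?thesis
    by (simp add: sum.atMost_Suc_shift sum.distrib algebra_simps del: sum.atMost_Suc)
qed

context finite_linop
begin

lemma funpow_eq_shift_expansion:
  "(A ^^ k) f = (\<lambda>z. \<Sum>j\<le>k. of_nat (k choose j) * (- c) ^ (k - j) * (shift c A ^^ j) f z)"
proof (induction k)
  case (Suc k)
  have shift_step: "A ((shift c A ^^ j) f) z = (shift c A ^^ Suc j) f z + (- c) * (shift c A ^^ j) f z"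
    for j z by (simp add: shift_def)
  have "(A ^^ Suc k) f
      = A (\<lambda>z. \<Sum>j\<le>k. of_nat (k choose j) * (- c) ^ (k - j) * (shift c A ^^ j) f z)"
    by (simp only: funpow.simps comp_def Suc.IH)
  also have "\<dots> = (\<lambda>z. \<Sum>j\<le>k. of_nat (k choose j) * (- c) ^ (k - j) * A ((shift c A ^^ j) f) z)"
    by (simp only: apply_sum[OF finite_atMost] homogeneous)
  also have "\<dots> = (\<lambda>z. \<Sum>j\<le>Suc k. of_nat (Suc k choose j) * (- c) ^ (Suc k - j) * (shift c A ^^ j) f z)"
    unfolding shift_step by (rule ext) (rule pascal_sum_step)
  finally show ?case .
qed simp

text \<open>Uniformization: for large \<open>c\<close> the operator \<open>A + c\<close> is positive, so this identity gives
  positivity of \<open>exp (t A)\<close>.\<close>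
lemma semigroup_eq_shift:
  assumes x: "x \<in> S"
  shows "semigroup t A f x = exp (- (c * t)) * semigroup t (shift c A) f x"
proof -
  interpret B: finite_linop S "shift c A" by (rule finite_linop_shift)
  define a where "a j = t ^ j / fact j * (shift c A ^^ j) f x" for j
  define b where "b i = (- (c * t)) ^ i / fact i" for i
  have summable_a: "summable (\<lambda>k. norm (a k))"
    unfolding a_def by (rule B.summable_norm_semigroup_terms[OF x])
  have summable_b: "summable (\<lambda>k. norm (b k))"
    using summable_exp[of "\<bar>c * t\<bar>"] unfolding b_def
    by (rule summable_cong[THEN iffD1, rotated]) (simp add: power_abs divide_inverse abs_mult mult.commute)
  have "semigroup t A f x = (\<Sum>k. \<Sum>j\<le>k. a j * b (k - j))"
    unfolding semigroup_def
  proof (rule suminf_cong)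
    fix k
    have "t ^ k / fact k * (of_nat (k choose j) * (- c) ^ (k - j) * (shift c A ^^ j) f x)
        = a j * b (k - j)" if "j \<le> k" for j
    proof -
      have "t ^ k = t ^ j * t ^ (k - j)" using that by (simp flip: power_add)
      moreover have "(- (c * t)) ^ (k - j) = (- c) ^ (k - j) * t ^ (k - j)"
        by (simp flip: power_mult_distrib)
      ultimately show ?thesis
        unfolding a_def b_def binomial_fact[OF that] using that
        by (simp add: field_simps power_mult_distrib)
    qed
    then show "t ^ k / fact k * (A ^^ k) f x = (\<Sum>j\<le>k. a j * b (k - j))"
      by (simp add: funpow_eq_shift_expansion[of k f c] sum_distrib_left)
  qed
  also have "\<dots> = (\<Sum>k. a k) * (\<Sum>k. b k)"
    by (rule Cauchy_product[OF summable_a summable_b, symmetric])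
  also have "(\<Sum>k. b k) = exp (- (c * t))"
    using exp_converges[of "- (c * t)"] unfolding b_def by (simp add: sums_iff divide_inverse mult.commute)
  finally show ?thesis by (simp add: semigroup_def a_def mult.commute)
qed

definition diag_bound :: real where
  "diag_bound = (\<Sum>z\<in>S. \<bar>A (delta z) z\<bar>)"

lemma diag_bound_nonneg: "diag_bound \<ge> 0"
  unfolding diag_bound_def by (auto intro: sum_nonneg)

end

locale quasi_positive = finite_linop +
  assumes off_diagonal_nonneg: "\<And>x y. x \<in> S \<Longrightarrow> y \<in> S \<Longrightarrow> y \<noteq> x \<Longrightarrow> A (delta y) x \<ge> 0"
begin

lemma shift_diag_bound_nonneg:
  assumes h: "\<And>y. y \<in> S \<Longrightarrow> h y \<ge> 0" and x: "x \<in> S"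
  shows "shift diag_bound A h x \<ge> 0"
proof -
  have "(\<Sum>y\<in>S - {x}. h y * A (delta y) x) \<ge> 0"
    by (rule sum_nonneg) (auto intro!: mult_nonneg_nonneg h off_diagonal_nonneg x)
  moreover have "\<bar>A (delta x) x\<bar> \<le> diag_bound"
    unfolding diag_bound_def by (rule member_le_sum[of x S "\<lambda>z. \<bar>A (delta z) z\<bar>"]) (auto simp: x finite_S)
  then have "h x * (A (delta x) x + diag_bound) \<ge> 0"
    using h[OF x] by (intro mult_nonneg_nonneg) linarith+
  moreover have "A h x = h x * A (delta x) x + (\<Sum>y\<in>S - {x}. h y * A (delta y) x)"
    using apply_eq_matrix[OF x, of h] x finite_S by (simp add: sum.remove)
  ultimately show ?thesis unfolding shift_def by (simp add: algebra_simps)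
qed

lemma semigroup_ge_exp:
  assumes x: "x \<in> S" and t: "t \<ge> 0" and f: "\<And>y. y \<in> S \<Longrightarrow> f y \<ge> 0"
  shows "semigroup t A f x \<ge> exp (- (diag_bound * t)) * f x"
proof -
  interpret B: finite_linop S "shift diag_bound A" by (rule finite_linop_shift)
  have funpow_nonneg: "(shift diag_bound A ^^ j) f y \<ge> 0" if "y \<in> S" for j y
    using that by (induction j arbitrary: y) (auto intro: f shift_diag_bound_nonneg)
  have "f x = (\<Sum>k\<in>{0}. t ^ k / fact k * (shift diag_bound A ^^ k) f x)" by simp
  also have "\<dots> \<le> semigroup t (shift diag_bound A) f x"
    unfolding semigroup_def using t
    by (intro sum_le_suminf B.summable_semigroup_terms x)
      (auto intro!: divide_nonneg_pos mult_nonneg_nonneg funpow_nonneg x)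
  finally show ?thesis
    unfolding semigroup_eq_shift[OF x, of t f diag_bound] by (intro mult_left_mono) auto
qed

lemma semigroup_delta_nonneg:
  assumes "x \<in> S" "t \<ge> 0" "y \<in> S"
  shows "semigroup t A (delta y) x \<ge> 0"
proof -
  have "exp (- (diag_bound * t)) * delta y x \<le> semigroup t A (delta y) x"
    by (rule semigroup_ge_exp[OF assms(1,2)]) (simp add: delta_def)
  moreover have "0 \<le> exp (- (diag_bound * t)) * delta y x" by (simp add: delta_def)
  ultimately show ?thesis by linarith
qed

end

locale markov_generator = quasi_positive +
  assumes apply_const: "\<And>y. y \<in> S \<Longrightarrow> A (\<lambda>_. 1) y = 0"
begin

lemma semigroup_const:
  assumes x: "x \<in> S"
  shows "semigroup t A (\<lambda>_. 1) x = 1"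
proof -
  have "(A ^^ Suc k) (\<lambda>_. 1) y = 0" if "y \<in> S" for k y
    using that
  proof (induction k arbitrary: y)
    case (Suc k)
    have "(A ^^ Suc (Suc k)) (\<lambda>_. 1) y = A ((A ^^ Suc k) (\<lambda>_. 1)) y" by simp
    also have "\<dots> = A (\<lambda>_. 0) y" by (rule depends_on_S[OF Suc.IH Suc.prems])
    finally show ?case by (simp add: apply_zero)
  qed (simp add: apply_const)
  then have "t ^ k / fact k * (A ^^ k) (\<lambda>_. 1) x = (if k = 0 then 1 else 0)" for k
    using x by (cases k) auto
  then have "semigroup t A (\<lambda>_. 1) x = (\<Sum>k. if k = 0 then 1 else 0)"
    unfolding semigroup_def by presburger
  also have "\<dots> = 1" using sums_single[of 0 "\<lambda>_. 1::real"] by (simp add: sums_iff)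
  finally show ?thesis .
qed

lemma semigroup_delta_sum: "x \<in> S \<Longrightarrow> (\<Sum>y\<in>S. semigroup t A (delta y) x) = 1"
  using semigroup_eq_matrix[of x t "\<lambda>_. 1"] semigroup_const[of x t] by simp

lemma abs_semigroup_le:
  assumes x: "x \<in> S" and t: "t \<ge> 0" and h: "\<And>y. y \<in> S \<Longrightarrow> \<bar>h y\<bar> \<le> K"
  shows "\<bar>semigroup t A h x\<bar> \<le> K"
proof -
  have "\<bar>semigroup t A h x\<bar> \<le> (\<Sum>y\<in>S. \<bar>h y * semigroup t A (delta y) x\<bar>)"
    unfolding semigroup_eq_matrix[OF x, of t h] by (rule sum_abs)
  also have "\<dots> \<le> (\<Sum>y\<in>S. K * semigroup t A (delta y) x)"
    using semigroup_delta_nonneg[OF x t] h by (intro sum_mono) (simp add: abs_mult mult_right_mono)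
  also have "\<dots> = K" by (simp flip: sum_distrib_left add: semigroup_delta_sum[OF x])
  finally show ?thesis .
qed

text \<open>Duhamel's principle: \<open>s \<mapsto> exp (s A) G (t - s)\<close> interpolates between \<open>G t\<close> and
  \<open>exp (t A) G 0\<close>, with derivative bounded by \<open>K\<close> because \<open>exp (s A)\<close> is a contraction.\<close>
lemma duhamel_bound:
  assumes x: "x \<in> S" and t: "t \<ge> 0"
    and dG: "\<And>r \<eta>. r \<in> {0..t} \<Longrightarrow> \<eta> \<in> S \<Longrightarrow> ((\<lambda>r. G r \<eta>) has_real_derivative G' r \<eta>) (at r)"
    and bound: "\<And>r \<eta>. r \<in> {0..t} \<Longrightarrow> \<eta> \<in> S \<Longrightarrow> \<bar>A (G r) \<eta> - G' r \<eta>\<bar> \<le> K"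
  shows "\<bar>semigroup t A (G 0) x - G t x\<bar> \<le> t * K"
proof (cases "t = 0")
  case True then show ?thesis by (simp add: semigroup_at_0)
next
  case False
  define u where "u s = semigroup s A (G (t - s)) x" for s
  define u' where "u' s = semigroup s A (\<lambda>y. A (G (t - s)) y - G' (t - s) y) x" for s
  have "\<forall>s. 0 \<le> s \<and> s \<le> t \<longrightarrow> (u has_real_derivative u' s) (at s)"
    unfolding u_def u'_def by (auto intro!: semigroup_backward_has_derivative[OF x] dG)
  then obtain s where s: "0 < s" "s < t" and mvt: "u t - u 0 = (t - 0) * u' s"
    using MVT2[of 0 t u u'] False t by auto
  have "\<bar>u' s\<bar> \<le> K"
    unfolding u'_def using s by (intro abs_semigroup_le[OF x] bound) auto
  moreover have "u t = semigroup t A (G 0) x" and "u 0 = G t x"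
    by (simp_all add: u_def semigroup_at_0)
  ultimately show ?thesis using mvt t by (simp add: abs_mult mult_left_mono)
qed

end

section \<open>The killed chain\<close>

lemma sum_UNIV_option: "(\<Sum>w\<in>UNIV. h w) = h None + (\<Sum>z\<in>UNIV. h (Some z))"
  for h :: "'a::finite option \<Rightarrow> 'b::comm_monoid_add"
  unfolding UNIV_option_conv by (simp add: sum.reindex)

lemma Qop_delta: "Qop q (delta y) x = q x y"
  unfolding Qop_def delta_def by (simp add: if_distrib cong: if_cong)

lemma expQ_eq_semigroup: "expQ q r y z = semigroup r (Qop q) (delta z) y"
  unfolding expQ_def delta_def[abs_def] ..

locale killed_chain =
  fixes q :: "'a::finite option \<Rightarrow> 'a option \<Rightarrow> real"
  assumes rate_matrix: "rate_matrix q"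
    and cemetery_absorbing: "\<forall>y. q None y = 0"
begin

sublocale Q: markov_generator UNIV "Qop q"
proof
  fix f g :: "'a option \<Rightarrow> real"
  show "Qop q (\<lambda>x. f x + g x) = (\<lambda>x. Qop q f x + Qop q g x)"
    unfolding Qop_def by (rule ext) (simp add: sum.distrib algebra_simps)
next
  fix c and f :: "'a option \<Rightarrow> real"
  show "Qop q (\<lambda>x. c * f x) = (\<lambda>x. c * Qop q f x)"
    unfolding Qop_def by (rule ext) (simp add: sum_distrib_left algebra_simps)
next
  fix f g :: "'a option \<Rightarrow> real" and x
  assume "\<And>y. y \<in> UNIV \<Longrightarrow> f y = g y"
  then show "Qop q f x = Qop q g x" by (simp add: Qop_def)
next
  fix x y :: "'a option"
  assume "y \<noteq> x"
  then show "Qop q (delta y) x \<ge> 0"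
    using rate_matrix by (simp add: Qop_delta rate_matrix_def)
next
  fix y :: "'a option"
  show "Qop q (\<lambda>_. 1) y = 0"
    using rate_matrix by (simp add: Qop_def rate_matrix_def)
qed simp

lemma expQ_has_derivative:
  "((\<lambda>r. expQ q r y z) has_real_derivative (\<Sum>w\<in>UNIV. q y w * expQ q r w z)) (at r)"
  unfolding expQ_eq_semigroup
  by (rule DERIV_cong[OF Q.semigroup_has_derivative])
    (simp_all flip: Q.apply_semigroup add: Qop_def)

lemma expQ_cemetery: "expQ q r None z = delta z None"
proof -
  have "\<forall>r. ((\<lambda>r. expQ q r None z) has_real_derivative 0) (at r)"
    using expQ_has_derivative[of None z] cemetery_absorbing by simp
  then have "expQ q r None z = expQ q 0 None z" by (rule DERIV_isconst_all)
  then show ?thesis unfolding expQ_eq_semigroup Q.semigroup_at_0 .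
qed

lemma expQ_row_sum: "(\<Sum>z\<in>UNIV. expQ q r y z) = 1"
  unfolding expQ_eq_semigroup by (rule Q.semigroup_delta_sum) simp

lemma expQ_nonneg: "r \<ge> 0 \<Longrightarrow> expQ q r y z \<ge> 0"
  unfolding expQ_eq_semigroup by (rule Q.semigroup_delta_nonneg) auto

lemma expQ_diag_ge: "r \<ge> 0 \<Longrightarrow> expQ q r y y \<ge> exp (- (Q.diag_bound * r))"
  using Q.semigroup_ge_exp[of y r "delta y"] unfolding expQ_eq_semigroup by (simp add: delta_def)

definition sub_gen :: "('a \<Rightarrow> real) \<Rightarrow> 'a \<Rightarrow> real" where
  "sub_gen \<phi> y = (\<Sum>z\<in>UNIV. q (Some y) (Some z) * \<phi> z)"

definition kill_rate :: "'a \<Rightarrow> real" where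
  "kill_rate y = q (Some y) None"

text \<open>\<open>sub_trans x r\<close> and \<open>survival r\<close> are the functions \<open>\<alpha>\<^sub>r\<close> and \<open>\<beta>\<^sub>r\<close> of the proof idea.\<close>
definition sub_trans :: "'a \<Rightarrow> real \<Rightarrow> 'a \<Rightarrow> real" where
  "sub_trans x r y = expQ q r (Some y) (Some x)"

definition survival :: "real \<Rightarrow> 'a \<Rightarrow> real" where
  "survival r y = 1 - expQ q r (Some y) None"

lemma sum_sub_rates: "(\<Sum>z\<in>UNIV. q (Some y) (Some z)) = - kill_rate y"
  using rate_matrix unfolding rate_matrix_def kill_rate_def by (simp add: sum_UNIV_option add_eq_0_iff)

lemma survival_eq_sum: "survival r y = (\<Sum>x\<in>UNIV. sub_trans x r y)"
  using expQ_row_sum[of r "Some y"] unfolding survival_def sub_trans_def by (simp add: sum_UNIV_option)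

lemma sub_trans_at_0: "sub_trans x 0 y = delta x y"
  unfolding sub_trans_def expQ_eq_semigroup Q.semigroup_at_0 by (simp add: delta_def)

lemma survival_at_0: "survival 0 y = 1"
  unfolding survival_def expQ_eq_semigroup Q.semigroup_at_0 by (simp add: delta_def)

lemma sub_trans_has_derivative:
  "((\<lambda>r. sub_trans x r y) has_real_derivative sub_gen (sub_trans x r) y) (at r)"
  unfolding sub_trans_def
  by (rule DERIV_cong[OF expQ_has_derivative])
    (simp add: sum_UNIV_option expQ_cemetery sub_gen_def sub_trans_def delta_def)

lemma survival_has_derivative:
  "((\<lambda>r. survival r y) has_real_derivative sub_gen (survival r) y) (at r)"
proof -
  have "(\<Sum>w\<in>UNIV. q (Some y) w * expQ q r w None)
      = kill_rate y + (\<Sum>z\<in>UNIV. q (Some y) (Some z) * (1 - survival r z))"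
    by (simp add: sum_UNIV_option expQ_cemetery kill_rate_def survival_def delta_def)
  also have "\<dots> = - sub_gen (survival r) y"
    by (simp add: sub_gen_def algebra_simps sum_subtractf sum_sub_rates)
  finally show ?thesis
    unfolding survival_def using DERIV_diff[OF DERIV_const[of 1] expQ_has_derivative[of "Some y" None r]]
    by simp
qed

lemma sub_trans_nonneg: "r \<ge> 0 \<Longrightarrow> sub_trans x r y \<ge> 0"
  unfolding sub_trans_def by (rule expQ_nonneg)

lemma sub_trans_le_survival: "r \<ge> 0 \<Longrightarrow> sub_trans x r y \<le> survival r y"
  unfolding survival_eq_sum by (rule member_le_sum) (auto intro: sub_trans_nonneg)

lemma survival_le_1: "r \<ge> 0 \<Longrightarrow> survival r y \<le> 1"
  unfolding survival_def using expQ_nonneg[of r "Some y" None] by simp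

lemma survival_ge_exp: "r \<ge> 0 \<Longrightarrow> survival r y \<ge> exp (- (Q.diag_bound * r))"
  using sub_trans_le_survival[of r y y] expQ_diag_ge[of r "Some y"] unfolding sub_trans_def by simp

definition rate_bound :: real where
  "rate_bound = (\<Sum>u\<in>UNIV. \<Sum>v\<in>UNIV. \<bar>q u v\<bar>)"

lemma abs_rate_le: "\<bar>q u v\<bar> \<le> rate_bound"
proof -
  have "\<bar>q u v\<bar> \<le> (\<Sum>v\<in>UNIV. \<bar>q u v\<bar>)" by (rule member_le_sum) auto
  also have "\<dots> \<le> rate_bound"
    unfolding rate_bound_def by (rule member_le_sum[of u UNIV "\<lambda>u. \<Sum>v\<in>UNIV. \<bar>q u v\<bar>"]) (auto intro: sum_nonneg)
  finally show ?thesis .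
qed

lemma rate_bound_nonneg: "rate_bound \<ge> 0"
  using abs_rate_le[of None None] by linarith

lemma survival_ge_exp_horizon:
  assumes "r \<in> {0..T}"
  shows "exp (- (Q.diag_bound * T)) \<le> survival r y"
proof -
  have "exp (- (Q.diag_bound * T)) \<le> exp (- (Q.diag_bound * r))"
    using assms Q.diag_bound_nonneg by (auto intro: mult_left_mono)
  also have "\<dots> \<le> survival r y" using assms by (intro survival_ge_exp) auto
  finally show ?thesis .
qed

end

section \<open>The Fleming-Viot generator\<close>

lemma sum_card_fiber:
  fixes \<eta> :: "nat \<Rightarrow> 'a::finite" and \<psi> :: "'a \<Rightarrow> real"
  assumes "finite J"
  shows "(\<Sum>z\<in>UNIV. real (card {j\<in>J. \<eta> j = z}) * \<psi> z) = (\<Sum>j\<in>J. \<psi> (\<eta> j))"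
proof -
  have "(\<Sum>j\<in>{j\<in>J. \<eta> j = z}. \<psi> (\<eta> j)) = real (card {j\<in>J. \<eta> j = z}) * \<psi> z" for z
    by (subst sum.cong[OF refl, where h="\<lambda>_. \<psi> z"]) auto
  then show ?thesis
    using sum.group[of J UNIV \<eta> "\<lambda>j. \<psi> (\<eta> j)"] assms by simp
qed

lemma ratio_jump:
  fixes a b da db :: real
  assumes "b \<noteq> 0" "b + db \<noteq> 0"
  shows "(a + da) / (b + db) - a / b = (da - a / b * db) / b - (da - a / b * db) * db / (b * (b + db))"
proof -
  obtain c where "c = b + db" by simp
  then have db: "db = c - b" by simp
  show ?thesis using assms unfolding db by (simp add: field_simps)
qed

lemma abs_ratio_jump_remainder_le:
  fixes b db da g c :: real
  assumes c: "c > 0" and "b \<ge> c" "b + db \<ge> c" and "\<bar>da\<bar> \<le> 1" "\<bar>db\<bar> \<le> 1" "\<bar>g\<bar> \<le> 1"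
  shows "\<bar>(da - g * db) * db / (b * (b + db))\<bar> \<le> 2 / (c * c)"
proof -
  have "\<bar>g * db\<bar> \<le> 1" using assms by (simp add: abs_mult mult_le_one)
  then have "\<bar>da - g * db\<bar> \<le> 2" using assms by linarith
  then have num: "\<bar>(da - g * db) * db\<bar> \<le> 2"
    using assms mult_mono[of "\<bar>da - g * db\<bar>" 2 "\<bar>db\<bar>" 1] by (simp add: abs_mult)
  have den: "b * (b + db) \<ge> c * c" using assms by (intro mult_mono) auto
  have "\<bar>(da - g * db) * db / (b * (b + db))\<bar> = \<bar>(da - g * db) * db\<bar> / (b * (b + db))"
    using assms by (simp add: abs_div)
  also have "\<dots> \<le> 2 / (c * c)"
    using num den c by (intro frac_le) auto
  finally show ?thesis .
qed

lemma configs_update: "\<eta> \<in> configs N \<Longrightarrow> i < N \<Longrightarrow> \<eta>(i := z) \<in> configs N"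
  unfolding configs_def by (auto simp: PiE_iff extensional_def)

locale fleming_viot = killed_chain q for q :: "'a::finite option \<Rightarrow> 'a option \<Rightarrow> real" +
  fixes N :: nat
  assumes two_le_N: "N \<ge> 2"
begin

definition fv_rate :: "(nat \<Rightarrow> 'a) \<Rightarrow> nat \<Rightarrow> 'a \<Rightarrow> real" where
  "fv_rate \<eta> i z = q (Some (\<eta> i)) (Some z)
     + q (Some (\<eta> i)) None * (real (card {j\<in>{..<N}. j \<noteq> i \<and> \<eta> j = z}) / (real N - 1))"

lemma FV_gen_eq: "FV_gen q N f \<eta> = (\<Sum>i<N. \<Sum>z\<in>UNIV - {\<eta> i}. fv_rate \<eta> i z * (f (\<eta>(i := z)) - f \<eta>))"
  unfolding FV_gen_def fv_rate_def ..

lemma fv_rate_nonneg: "z \<noteq> \<eta> i \<Longrightarrow> fv_rate \<eta> i z \<ge> 0"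
  using rate_matrix two_le_N unfolding rate_matrix_def fv_rate_def
  by (intro add_nonneg_nonneg mult_nonneg_nonneg divide_nonneg_pos) auto

lemma abs_fv_rate_le:
  assumes i: "i < N"
  shows "\<bar>fv_rate \<eta> i z\<bar> \<le> 2 * rate_bound"
proof -
  have "card {j\<in>{..<N}. j \<noteq> i \<and> \<eta> j = z} \<le> card ({..<N} - {i})" by (intro card_mono) auto
  moreover define c where "c = real (card {j\<in>{..<N}. j \<noteq> i \<and> \<eta> j = z}) / (real N - 1)"
  ultimately have "0 \<le> c" "c \<le> 1"
    using i two_le_N by auto
  then have "\<bar>q (Some (\<eta> i)) None * c\<bar> \<le> \<bar>q (Some (\<eta> i)) None\<bar>"
    by (simp add: abs_mult mult_right_le_one_le)
  then show ?thesis
    unfolding fv_rate_def c_def[symmetric]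
    using abs_rate_le[of "Some (\<eta> i)" "Some z"] abs_rate_le[of "Some (\<eta> i)" None]
    by linarith
qed

sublocale FV: markov_generator "configs N" "FV_gen q N"
proof
  show "finite (configs N :: (nat \<Rightarrow> 'a) set)" unfolding configs_def by (rule finite_PiE) auto
next
  fix f g :: "(nat \<Rightarrow> 'a) \<Rightarrow> real"
  show "FV_gen q N (\<lambda>x. f x + g x) = (\<lambda>x. FV_gen q N f x + FV_gen q N g x)"
    unfolding FV_gen_eq by (rule ext) (simp add: sum.distrib[symmetric] algebra_simps)
next
  fix c and f :: "(nat \<Rightarrow> 'a) \<Rightarrow> real"
  show "FV_gen q N (\<lambda>x. c * f x) = (\<lambda>x. c * FV_gen q N f x)"
    unfolding FV_gen_eq by (rule ext) (simp add: sum_distrib_left algebra_simps)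
next
  fix f g :: "(nat \<Rightarrow> 'a) \<Rightarrow> real" and \<eta> :: "nat \<Rightarrow> 'a"
  assume fg: "\<And>\<eta>'. \<eta>' \<in> configs N \<Longrightarrow> f \<eta>' = g \<eta>'" and \<eta>: "\<eta> \<in> configs N"
  show "FV_gen q N f \<eta> = FV_gen q N g \<eta>"
    unfolding FV_gen_eq using fg[OF configs_update[OF \<eta>]] fg[OF \<eta>] by (intro sum.cong refl) auto
next
  fix \<eta> \<eta>' :: "nat \<Rightarrow> 'a"
  assume "\<eta>' \<noteq> \<eta>"
  then show "FV_gen q N (delta \<eta>') \<eta> \<ge> 0"
    unfolding FV_gen_eq by (intro sum_nonneg mult_nonneg_nonneg fv_rate_nonneg) (auto simp: delta_def)
next
  fix \<eta> :: "nat \<Rightarrow> 'a"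
  show "FV_gen q N (\<lambda>_. 1) \<eta> = 0" unfolding FV_gen_eq by simp
qed

definition conf_sum :: "('a \<Rightarrow> real) \<Rightarrow> (nat \<Rightarrow> 'a) \<Rightarrow> real" where
  "conf_sum \<phi> \<eta> = (\<Sum>i<N. \<phi> (\<eta> i))"

lemma conf_sum_update:
  assumes i: "i < N"
  shows "conf_sum \<phi> (\<eta>(i := z)) = conf_sum \<phi> \<eta> + (\<phi> z - \<phi> (\<eta> i))"
proof -
  have "conf_sum \<phi> (\<eta>(i := z)) = \<phi> z + (\<Sum>j\<in>{..<N} - {i}. \<phi> (\<eta> j))"
    unfolding conf_sum_def using i by (subst sum.remove[of _ i]) auto
  moreover have "conf_sum \<phi> \<eta> = \<phi> (\<eta> i) + (\<Sum>j\<in>{..<N} - {i}. \<phi> (\<eta> j))"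
    unfolding conf_sum_def using i by (intro sum.remove) auto
  ultimately show ?thesis by simp
qed

lemma conf_sum_ge: "(\<And>y. c \<le> \<phi> y) \<Longrightarrow> real N * c \<le> conf_sum \<phi> \<eta>"
  unfolding conf_sum_def using sum_bounded_below[of "{..<N}" c "\<lambda>i. \<phi> (\<eta> i)"] by simp

lemma abs_conf_sum_le: "(\<And>y. \<bar>\<phi> y\<bar> \<le> c) \<Longrightarrow> \<bar>conf_sum \<phi> \<eta>\<bar> \<le> real N * c"
  unfolding conf_sum_def
  by (rule order_trans[OF sum_abs]) (use sum_bounded_above[of "{..<N}" "\<lambda>i. \<bar>\<phi> (\<eta> i)\<bar>" c] in simp)

lemma conf_sum_mono: "(\<And>y. \<phi> y \<le> \<psi> y) \<Longrightarrow> conf_sum \<phi> \<eta> \<le> conf_sum \<psi> \<eta>"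
  unfolding conf_sum_def by (rule sum_mono) auto

lemma FV_gen_conf_sum_eq_jumps:
  "FV_gen q N (conf_sum \<phi>) \<eta> = (\<Sum>i<N. \<Sum>z\<in>UNIV - {\<eta> i}. fv_rate \<eta> i z * (\<phi> z - \<phi> (\<eta> i)))"
  unfolding FV_gen_eq by (intro sum.cong refl) (simp add: conf_sum_update)

lemma sum_card_others:
  assumes i: "i < N"
  shows "(\<Sum>z\<in>UNIV. real (card {j\<in>{..<N}. j \<noteq> i \<and> \<eta> j = z}) * (\<phi> z - \<phi> (\<eta> i)))
      = conf_sum \<phi> \<eta> - real N * \<phi> (\<eta> i)"
proof -
  have "{j\<in>{..<N}. j \<noteq> i \<and> \<eta> j = z} = {j\<in>{..<N} - {i}. \<eta> j = z}" for z by auto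
  then have "(\<Sum>z\<in>UNIV. real (card {j\<in>{..<N}. j \<noteq> i \<and> \<eta> j = z}) * (\<phi> z - \<phi> (\<eta> i)))
      = (\<Sum>z\<in>UNIV. real (card {j\<in>{..<N} - {i}. \<eta> j = z}) * (\<phi> z - \<phi> (\<eta> i)))"
    by simp
  also have "\<dots> = (\<Sum>j\<in>{..<N} - {i}. \<phi> (\<eta> j) - \<phi> (\<eta> i))"
    by (rule sum_card_fiber) simp
  also have "\<dots> = (\<Sum>j<N. \<phi> (\<eta> j) - \<phi> (\<eta> i))" using i by (simp add: sum_diff1)
  finally show ?thesis by (simp add: conf_sum_def sum_subtractf)
qed

lemma sum_fv_rate_particle:
  assumes i: "i < N"
  shows "(\<Sum>z\<in>UNIV - {\<eta> i}. fv_rate \<eta> i z * (\<phi> z - \<phi> (\<eta> i)))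
       = sub_gen \<phi> (\<eta> i) + kill_rate (\<eta> i) * (conf_sum \<phi> \<eta> - \<phi> (\<eta> i)) / (real N - 1)"
proof -
  define w where "w = \<eta> i"
  have relocation: "(\<Sum>z\<in>UNIV. real (card {j\<in>{..<N}. j \<noteq> i \<and> \<eta> j = z}) * (\<phi> z - \<phi> w))
      = conf_sum \<phi> \<eta> - real N * \<phi> w"
    unfolding w_def using i by (rule sum_card_others)
  have "(\<Sum>z\<in>UNIV - {w}. fv_rate \<eta> i z * (\<phi> z - \<phi> w))
      = (\<Sum>z\<in>UNIV. fv_rate \<eta> i z * (\<phi> z - \<phi> w))"
    by (simp add: sum_diff1)
  also have "\<dots> = (\<Sum>z\<in>UNIV. q (Some w) (Some z) * (\<phi> z - \<phi> w)
      + kill_rate w / (real N - 1) * (real (card {j\<in>{..<N}. j \<noteq> i \<and> \<eta> j = z}) * (\<phi> z - \<phi> w)))"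
    by (intro sum.cong refl) (simp add: fv_rate_def kill_rate_def w_def field_simps)
  also have "\<dots> = (\<Sum>z\<in>UNIV. q (Some w) (Some z) * (\<phi> z - \<phi> w))
        + kill_rate w / (real N - 1)
          * (\<Sum>z\<in>UNIV. real (card {j\<in>{..<N}. j \<noteq> i \<and> \<eta> j = z}) * (\<phi> z - \<phi> w))"
    by (simp only: sum.distrib sum_distrib_left)
  also have "\<dots> = sub_gen \<phi> w + kill_rate w * \<phi> w + kill_rate w / (real N - 1) * (conf_sum \<phi> \<eta> - real N * \<phi> w)"
    unfolding relocation
    by (simp add: sub_gen_def algebra_simps sum_subtractf sum_sub_rates flip: sum_distrib_left)
  also have "\<dots> = sub_gen \<phi> w + kill_rate w * (conf_sum \<phi> \<eta> - \<phi> w) / (real N - 1)"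
    using two_le_N by (simp add: field_simps)
  finally show ?thesis unfolding w_def .
qed

text \<open>Killing at rate \<open>kill_rate y\<close> followed by relocation onto one of the other \<open>N - 1\<close>
  particles: up to the self-interaction term, this is the renormalisation in \<open>T\<^sub>t\<close>.\<close>
lemma FV_gen_conf_sum:
  "FV_gen q N (conf_sum \<phi>) \<eta> = conf_sum (sub_gen \<phi>) \<eta>
     + (conf_sum kill_rate \<eta> * conf_sum \<phi> \<eta> - conf_sum (\<lambda>y. kill_rate y * \<phi> y) \<eta>) / (real N - 1)"
proof -
  have "FV_gen q N (conf_sum \<phi>) \<eta>
      = (\<Sum>i<N. sub_gen \<phi> (\<eta> i) + kill_rate (\<eta> i) * (conf_sum \<phi> \<eta> - \<phi> (\<eta> i)) / (real N - 1))"
    unfolding FV_gen_conf_sum_eq_jumps by (intro sum.cong refl) (simp add: sum_fv_rate_particle)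
  also have "\<dots> = conf_sum (sub_gen \<phi>) \<eta>
      + (\<Sum>i<N. kill_rate (\<eta> i) * (conf_sum \<phi> \<eta> - \<phi> (\<eta> i))) / (real N - 1)"
    by (simp add: conf_sum_def sum.distrib sum_divide_distrib)
  also have "(\<Sum>i<N. kill_rate (\<eta> i) * (conf_sum \<phi> \<eta> - \<phi> (\<eta> i)))
      = conf_sum kill_rate \<eta> * conf_sum \<phi> \<eta> - conf_sum (\<lambda>y. kill_rate y * \<phi> y) \<eta>"
    by (simp add: right_diff_distrib sum_subtractf sum_distrib_right conf_sum_def[of kill_rate]
        conf_sum_def[of "\<lambda>y. kill_rate y * \<phi> y"])
  finally show ?thesis .
qed

text \<open>The second-order part of \<open>ratio_jump\<close>, summed against the jump rates.\<close>
definition ratio_remainder :: "('a \<Rightarrow> real) \<Rightarrow> ('a \<Rightarrow> real) \<Rightarrow> (nat \<Rightarrow> 'a) \<Rightarrow> real" where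
  "ratio_remainder \<alpha> \<beta> \<eta> = (\<Sum>i<N. \<Sum>z\<in>UNIV - {\<eta> i}. fv_rate \<eta> i z *
     (((\<alpha> z - \<alpha> (\<eta> i)) - conf_sum \<alpha> \<eta> / conf_sum \<beta> \<eta> * (\<beta> z - \<beta> (\<eta> i))) * (\<beta> z - \<beta> (\<eta> i))
       / (conf_sum \<beta> \<eta> * (conf_sum \<beta> \<eta> + (\<beta> z - \<beta> (\<eta> i))))))"

lemma conf_sum_pos: "(\<And>y. \<beta> y > 0) \<Longrightarrow> conf_sum \<beta> \<eta> > 0"
  unfolding conf_sum_def using two_le_N by (intro sum_pos) (auto simp: lessThan_empty_iff)

lemma abs_conf_sum_ratio_le:
  assumes "\<And>y. 0 \<le> \<alpha> y" "\<And>y. \<alpha> y \<le> \<beta> y" "\<And>y. 0 < \<beta> y"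
  shows "\<bar>conf_sum \<alpha> \<eta> / conf_sum \<beta> \<eta>\<bar> \<le> 1"
proof -
  have "0 \<le> conf_sum \<alpha> \<eta>" using conf_sum_ge[of 0 \<alpha> \<eta>] assms(1) by simp
  moreover have "conf_sum \<alpha> \<eta> \<le> conf_sum \<beta> \<eta>" by (rule conf_sum_mono) (fact assms(2))
  moreover have "0 < conf_sum \<beta> \<eta>" by (rule conf_sum_pos) (fact assms(3))
  ultimately show ?thesis by simp
qed

lemma FV_gen_ratio:
  assumes \<beta>_pos: "\<And>y. \<beta> y > 0"
  shows "FV_gen q N (\<lambda>\<eta>. conf_sum \<alpha> \<eta> / conf_sum \<beta> \<eta>) \<eta>
     = (FV_gen q N (conf_sum \<alpha>) \<eta> - conf_sum \<alpha> \<eta> / conf_sum \<beta> \<eta> * FV_gen q N (conf_sum \<beta>) \<eta>)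
         / conf_sum \<beta> \<eta>
       - ratio_remainder \<alpha> \<beta> \<eta>"
proof -
  define B where "B = conf_sum \<beta> \<eta>"
  define g where "g = conf_sum \<alpha> \<eta> / B"
  define E where "E i z = ((\<alpha> z - \<alpha> (\<eta> i)) - g * (\<beta> z - \<beta> (\<eta> i))) * (\<beta> z - \<beta> (\<eta> i))
      / (B * (B + (\<beta> z - \<beta> (\<eta> i))))" for i z
  have B_pos: "conf_sum \<beta> \<eta>' > 0" for \<eta>'
    using \<beta>_pos by (rule conf_sum_pos)
  have jump: "fv_rate \<eta> i z * (conf_sum \<alpha> (\<eta>(i := z)) / conf_sum \<beta> (\<eta>(i := z)) - conf_sum \<alpha> \<eta> / conf_sum \<beta> \<eta>)
      = (fv_rate \<eta> i z * (\<alpha> z - \<alpha> (\<eta> i)) - g * (fv_rate \<eta> i z * (\<beta> z - \<beta> (\<eta> i)))) / B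
        - fv_rate \<eta> i z * E i z" if "i < N" for i z
  proof -
    have ratio_diff: "conf_sum \<alpha> (\<eta>(i := z)) / conf_sum \<beta> (\<eta>(i := z)) - conf_sum \<alpha> \<eta> / conf_sum \<beta> \<eta>
        = ((\<alpha> z - \<alpha> (\<eta> i)) - g * (\<beta> z - \<beta> (\<eta> i))) / B - E i z"
      unfolding E_def g_def conf_sum_update[OF that] B_def
      using B_pos[of \<eta>] B_pos[of "\<eta>(i := z)"]
      by (intro ratio_jump) (auto simp flip: conf_sum_update[OF that])
    show ?thesis unfolding ratio_diff using B_pos[of \<eta>] unfolding B_def by (simp add: field_simps)
  qed
  have "FV_gen q N (\<lambda>\<eta>. conf_sum \<alpha> \<eta> / conf_sum \<beta> \<eta>) \<eta>
      = (\<Sum>i<N. \<Sum>z\<in>UNIV - {\<eta> i}. (fv_rate \<eta> i z * (\<alpha> z - \<alpha> (\<eta> i))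
          - g * (fv_rate \<eta> i z * (\<beta> z - \<beta> (\<eta> i)))) / B - fv_rate \<eta> i z * E i z)"
    unfolding FV_gen_eq by (intro sum.cong refl) (simp add: jump)
  also have "\<dots> = (FV_gen q N (conf_sum \<alpha>) \<eta> - g * FV_gen q N (conf_sum \<beta>) \<eta>) / B
      - ratio_remainder \<alpha> \<beta> \<eta>"
    unfolding FV_gen_conf_sum_eq_jumps ratio_remainder_def E_def g_def B_def
    by (simp add: sum_subtractf sum_divide_distrib[symmetric] sum_distrib_left)
  finally show ?thesis unfolding g_def B_def .
qed

lemma FV_gen_ratio_error:
  fixes \<alpha> \<beta> :: "'a \<Rightarrow> real" and \<eta> :: "nat \<Rightarrow> 'a"
  assumes \<beta>_pos: "\<And>y. \<beta> y > 0"
  defines "g \<equiv> conf_sum \<alpha> \<eta> / conf_sum \<beta> \<eta>"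
  shows "FV_gen q N (\<lambda>\<eta>. conf_sum \<alpha> \<eta> / conf_sum \<beta> \<eta>) \<eta>
      - (conf_sum (sub_gen \<alpha>) \<eta> - g * conf_sum (sub_gen \<beta>) \<eta>) / conf_sum \<beta> \<eta>
    = - ((conf_sum (\<lambda>y. kill_rate y * \<alpha> y) \<eta> - g * conf_sum (\<lambda>y. kill_rate y * \<beta> y) \<eta>)
          / (real N - 1) / conf_sum \<beta> \<eta>)
      - ratio_remainder \<alpha> \<beta> \<eta>"
proof -
  have "conf_sum \<alpha> \<eta> = g * conf_sum \<beta> \<eta>"
    unfolding g_def using conf_sum_pos[of \<beta>, OF \<beta>_pos, of \<eta>] by simp
  then have "FV_gen q N (conf_sum \<alpha>) \<eta> - g * FV_gen q N (conf_sum \<beta>) \<eta>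
      = (conf_sum (sub_gen \<alpha>) \<eta> - g * conf_sum (sub_gen \<beta>) \<eta>)
        - (conf_sum (\<lambda>y. kill_rate y * \<alpha> y) \<eta> - g * conf_sum (\<lambda>y. kill_rate y * \<beta> y) \<eta>) / (real N - 1)"
    unfolding FV_gen_conf_sum by (simp add: diff_divide_distrib add_divide_distrib algebra_simps)
  then show ?thesis
    unfolding FV_gen_ratio[OF \<beta>_pos] g_def[symmetric] by (simp add: diff_divide_distrib)
qed

lemma abs_ratio_remainder_le:
  assumes dl: "dl > 0"
    and \<alpha>_nonneg: "\<And>y. 0 \<le> \<alpha> y" and \<alpha>_le: "\<And>y. \<alpha> y \<le> \<beta> y"
    and \<beta>_le: "\<And>y. \<beta> y \<le> 1" and \<beta>_ge: "\<And>y. dl \<le> \<beta> y"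
  shows "\<bar>ratio_remainder \<alpha> \<beta> \<eta>\<bar> \<le> 4 * real CARD('a) * rate_bound / dl\<^sup>2 / real N"
proof -
  define c where "c = 2 * rate_bound * (2 / ((real N * dl) * (real N * dl)))"
  have B_ge: "conf_sum \<beta> \<eta>' \<ge> real N * dl" for \<eta>' by (rule conf_sum_ge[of dl \<beta>, OF \<beta>_ge])
  have "\<bar>conf_sum \<alpha> \<eta> / conf_sum \<beta> \<eta>\<bar> \<le> 1"
    using \<alpha>_nonneg \<alpha>_le order.strict_trans2[OF dl \<beta>_ge] by (rule abs_conf_sum_ratio_le)
  moreover have "\<bar>\<alpha> z - \<alpha> y\<bar> \<le> 1" "\<bar>\<beta> z - \<beta> y\<bar> \<le> 1" for y z
    using \<alpha>_nonneg[of y] \<alpha>_nonneg[of z] \<alpha>_le[of y] \<alpha>_le[of z] \<beta>_le[of y] \<beta>_le[of z]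
      \<beta>_ge[of y] \<beta>_ge[of z] dl
    by linarith+
  ultimately have term_le: "\<bar>fv_rate \<eta> i z *
     (((\<alpha> z - \<alpha> (\<eta> i)) - conf_sum \<alpha> \<eta> / conf_sum \<beta> \<eta> * (\<beta> z - \<beta> (\<eta> i))) * (\<beta> z - \<beta> (\<eta> i))
       / (conf_sum \<beta> \<eta> * (conf_sum \<beta> \<eta> + (\<beta> z - \<beta> (\<eta> i)))))\<bar> \<le> c" if "i < N" for i z
    unfolding c_def abs_mult
    using B_ge[of \<eta>] B_ge[of "\<eta>(i := z)"] dl two_le_N rate_bound_nonneg
    by (intro mult_mono abs_fv_rate_le that abs_ratio_jump_remainder_le)
      (auto simp: conf_sum_update[OF that])
  have "\<bar>ratio_remainder \<alpha> \<beta> \<eta>\<bar> \<le> (\<Sum>i<N. \<Sum>z\<in>UNIV - {\<eta> i}. c)"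
    unfolding ratio_remainder_def
    by (intro order_trans[OF sum_abs] sum_mono term_le) simp
  also have "\<dots> \<le> (\<Sum>i<N. real CARD('a) * c)"
  proof (intro sum_mono)
    have "c \<ge> 0" unfolding c_def using rate_bound_nonneg by simp
    then show "(\<Sum>z\<in>UNIV - {\<eta> i}. c) \<le> real CARD('a) * c" for i
      by (simp add: card_Diff_subset mult_right_mono)
  qed
  also have "\<dots> = 4 * real CARD('a) * rate_bound / dl\<^sup>2 / real N"
    unfolding c_def using two_le_N dl by (simp add: field_simps power2_eq_square)
  finally show ?thesis .
qed

lemma abs_conf_sum_kill_rate_le:
  assumes "\<And>y. \<bar>\<phi> y\<bar> \<le> 1"
  shows "\<bar>conf_sum (\<lambda>y. kill_rate y * \<phi> y) \<eta>\<bar> \<le> real N * rate_bound"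
proof (rule abs_conf_sum_le)
  fix y
  show "\<bar>kill_rate y * \<phi> y\<bar> \<le> rate_bound"
    using mult_mono[OF abs_rate_le[of "Some y" None] assms] rate_bound_nonneg
    by (simp add: kill_rate_def abs_mult)
qed

lemma FV_gen_ratio_approx:
  assumes dl: "dl > 0"
    and \<alpha>_nonneg: "\<And>y. 0 \<le> \<alpha> y" and \<alpha>_le: "\<And>y. \<alpha> y \<le> \<beta> y"
    and \<beta>_le: "\<And>y. \<beta> y \<le> 1" and \<beta>_ge: "\<And>y. dl \<le> \<beta> y"
  shows "\<bar>FV_gen q N (\<lambda>\<eta>. conf_sum \<alpha> \<eta> / conf_sum \<beta> \<eta>) \<eta>
      - (conf_sum (sub_gen \<alpha>) \<eta> - conf_sum \<alpha> \<eta> / conf_sum \<beta> \<eta> * conf_sum (sub_gen \<beta>) \<eta>) / conf_sum \<beta> \<eta>\<bar>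
    \<le> (2 * rate_bound / dl + 4 * real CARD('a) * rate_bound / dl\<^sup>2) / (real N - 1)"
proof -
  define B where "B = conf_sum \<beta> \<eta>"
  define g where "g = conf_sum \<alpha> \<eta> / B"
  define Y where "Y = conf_sum (\<lambda>y. kill_rate y * \<alpha> y) \<eta> - g * conf_sum (\<lambda>y. kill_rate y * \<beta> y) \<eta>"
  have B_ge: "B \<ge> real N * dl" unfolding B_def by (rule conf_sum_ge[of dl \<beta>, OF \<beta>_ge])
  have Npos: "real N - 1 > 0" using two_le_N by simp
  have B_pos: "B > 0" unfolding B_def using order.strict_trans2[OF dl \<beta>_ge] by (rule conf_sum_pos)
  have g_abs: "\<bar>g\<bar> \<le> 1"
    unfolding g_def B_def using \<alpha>_nonneg \<alpha>_le order.strict_trans2[OF dl \<beta>_ge]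
    by (rule abs_conf_sum_ratio_le)
  have "FV_gen q N (\<lambda>\<eta>. conf_sum \<alpha> \<eta> / conf_sum \<beta> \<eta>) \<eta>
      - (conf_sum (sub_gen \<alpha>) \<eta> - g * conf_sum (sub_gen \<beta>) \<eta>) / B
      = - (Y / (real N - 1) / B) - ratio_remainder \<alpha> \<beta> \<eta>"
    unfolding Y_def g_def B_def by (rule FV_gen_ratio_error) (rule order.strict_trans2[OF dl \<beta>_ge])
  moreover have "\<bar>Y\<bar> \<le> 2 * (real N * rate_bound)"
  proof -
    have "\<bar>\<alpha> y\<bar> \<le> 1" "\<bar>\<beta> y\<bar> \<le> 1" for y
      using \<alpha>_nonneg[of y] \<alpha>_le[of y] \<beta>_le[of y] \<beta>_ge[of y] dl by auto
    then have "\<bar>conf_sum (\<lambda>y. kill_rate y * \<alpha> y) \<eta>\<bar> \<le> real N * rate_bound"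
      "\<bar>conf_sum (\<lambda>y. kill_rate y * \<beta> y) \<eta>\<bar> \<le> real N * rate_bound"
      by (blast intro: abs_conf_sum_kill_rate_le)+
    moreover have "\<bar>g * conf_sum (\<lambda>y. kill_rate y * \<beta> y) \<eta>\<bar> \<le> \<bar>conf_sum (\<lambda>y. kill_rate y * \<beta> y) \<eta>\<bar>"
      using g_abs by (simp add: abs_mult mult_left_le_one_le)
    ultimately show ?thesis unfolding Y_def by linarith
  qed
  then have "\<bar>Y\<bar> / B \<le> 2 * (real N * rate_bound) / (real N * dl)"
    using B_ge B_pos dl two_le_N rate_bound_nonneg by (intro frac_le) auto
  have "\<bar>Y / (real N - 1) / B\<bar> \<le> 2 * rate_bound / dl / (real N - 1)"
  proof -
    have "\<bar>Y / (real N - 1) / B\<bar> = \<bar>Y\<bar> / B / (real N - 1)"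
      using B_pos Npos by (simp add: abs_div)
    also have "\<dots> \<le> 2 * (real N * rate_bound) / (real N * dl) / (real N - 1)"
      using \<open>\<bar>Y\<bar> / B \<le> _\<close> by (rule divide_right_mono) (use Npos in simp)
    finally show ?thesis using two_le_N by simp
  qed
  moreover have "\<bar>ratio_remainder \<alpha> \<beta> \<eta>\<bar> \<le> 4 * real CARD('a) * rate_bound / dl\<^sup>2 / (real N - 1)"
  proof -
    have "4 * real CARD('a) * rate_bound / dl\<^sup>2 / real N \<le> 4 * real CARD('a) * rate_bound / dl\<^sup>2 / (real N - 1)"
      using rate_bound_nonneg Npos by (intro divide_left_mono) auto
    then show ?thesis using abs_ratio_remainder_le[of dl \<alpha> \<beta> \<eta>, OF assms] by linarith
  qed
  ultimately show ?thesis
    unfolding B_def[symmetric] g_def[symmetric] add_divide_distrib by linarith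
qed

section \<open>Comparison with the conditioned evolution\<close>

definition Tconf :: "'a \<Rightarrow> real \<Rightarrow> (nat \<Rightarrow> 'a) \<Rightarrow> real" where
  "Tconf x r \<eta> = conf_sum (sub_trans x r) \<eta> / conf_sum (survival r) \<eta>"

lemma Tconf_at_0: "Tconf x 0 \<eta> = emp N \<eta> x"
proof -
  have "conf_sum (sub_trans x 0) \<eta> = (\<Sum>i\<in>{..<N}. if \<eta> i = x then 1 else 0)"
    unfolding conf_sum_def sub_trans_at_0 by (simp add: delta_def)
  also have "\<dots> = real (card {i\<in>{..<N}. \<eta> i = x})" by (simp flip: sum.inter_filter)
  finally show ?thesis
    unfolding Tconf_def emp_def by (simp add: conf_sum_def survival_at_0)
qed

lemma Tconf_eq_Tt: "Tconf x t \<xi> = Tt q t (emp N \<xi>) x"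
proof -
  have weighted_sum: "(\<Sum>y\<in>UNIV. emp N \<xi> y * \<psi> y) = conf_sum \<psi> \<xi> / real N" for \<psi>
    unfolding emp_def conf_sum_def
    by (simp add: sum_divide_distrib[symmetric] sum_card_fiber[of "{..<N}" \<xi> \<psi>, symmetric])
  have "conf_sum (survival t) \<xi> = real N - conf_sum (\<lambda>y. expQ q t (Some y) None) \<xi>"
    unfolding conf_sum_def survival_def by (simp add: sum_subtractf)
  then have "1 - (\<Sum>y\<in>UNIV. emp N \<xi> y * expQ q t (Some y) None) = conf_sum (survival t) \<xi> / real N"
    using two_le_N by (simp add: weighted_sum field_simps)
  moreover have "(\<Sum>y\<in>UNIV. emp N \<xi> y * expQ q t (Some y) (Some x)) = conf_sum (sub_trans x t) \<xi> / real N"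
    using weighted_sum[of "sub_trans x t"] unfolding sub_trans_def .
  ultimately show ?thesis
    unfolding Tt_def Tconf_def using two_le_N by simp
qed

definition Tconf_deriv :: "'a \<Rightarrow> real \<Rightarrow> (nat \<Rightarrow> 'a) \<Rightarrow> real" where
  "Tconf_deriv x r \<eta> = (conf_sum (sub_gen (sub_trans x r)) \<eta>
     - Tconf x r \<eta> * conf_sum (sub_gen (survival r)) \<eta>) / conf_sum (survival r) \<eta>"

lemma Tconf_has_derivative:
  assumes r: "r \<ge> 0"
  shows "((\<lambda>r. Tconf x r \<eta>) has_real_derivative Tconf_deriv x r \<eta>) (at r)"
proof -
  have B_pos: "conf_sum (survival r) \<eta> > 0"
    using survival_ge_exp[OF r] by (intro conf_sum_pos) (rule order.strict_trans2[OF exp_gt_zero])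
  have "((\<lambda>r. conf_sum (sub_trans x r) \<eta>) has_real_derivative conf_sum (sub_gen (sub_trans x r)) \<eta>) (at r)"
    unfolding conf_sum_def by (intro DERIV_sum sub_trans_has_derivative)
  moreover have "((\<lambda>r. conf_sum (survival r) \<eta>) has_real_derivative conf_sum (sub_gen (survival r)) \<eta>) (at r)"
    unfolding conf_sum_def by (intro DERIV_sum survival_has_derivative)
  ultimately show ?thesis
    unfolding Tconf_deriv_def Tconf_def using B_pos
    by (intro DERIV_cong[OF DERIV_divide]) (auto simp: field_simps)
qed

lemma abs_FV_mean_minus_Tt_le:
  assumes dl: "dl > 0" and floor: "\<And>r y. r \<in> {0..T} \<Longrightarrow> dl \<le> survival r y"
    and t: "t \<in> {0..T}" and \<xi>: "\<xi> \<in> configs N"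
  shows "\<bar>FV_mean q N t \<xi> x - Tt q t (emp N \<xi>) x\<bar>
    \<le> T * ((2 * rate_bound / dl + 4 * real CARD('a) * rate_bound / dl\<^sup>2) / (real N - 1))"
proof -
  define K where "K = (2 * rate_bound / dl + 4 * real CARD('a) * rate_bound / dl\<^sup>2) / (real N - 1)"
  have t0: "0 \<le> t" "t \<le> T" using t by auto
  have initial: "Tconf x 0 = (\<lambda>\<eta>. emp N \<eta> x)" by (rule ext) (rule Tconf_at_0)
  have "\<bar>semigroup t (FV_gen q N) (\<lambda>\<eta>. emp N \<eta> x) \<xi> - Tconf x t \<xi>\<bar> \<le> t * K"
    unfolding initial[symmetric]
  proof (rule FV.duhamel_bound[OF \<xi> t0(1)])
    fix r \<eta> assume "r \<in> {0..t}"
    then have r: "r \<in> {0..T}" using t0 by auto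
    then show "((\<lambda>r. Tconf x r \<eta>) has_real_derivative Tconf_deriv x r \<eta>) (at r)"
      by (intro Tconf_has_derivative) simp
    show "\<bar>FV_gen q N (Tconf x r) \<eta> - Tconf_deriv x r \<eta>\<bar> \<le> K"
      unfolding K_def Tconf_deriv_def Tconf_def[abs_def] using r
      by (intro FV_gen_ratio_approx dl floor sub_trans_nonneg sub_trans_le_survival survival_le_1) auto
  qed
  moreover have "K \<ge> 0"
    unfolding K_def using dl two_le_N rate_bound_nonneg by (intro divide_nonneg_pos add_nonneg_nonneg) auto
  then have "t * K \<le> T * K" using t0 by (intro mult_right_mono)
  ultimately show ?thesis
    unfolding FV_mean_def Tconf_eq_Tt K_def by linarith
qed

lemma norm2_FV_mean_minus_Tt_le:
  assumes dl: "dl > 0" and floor: "\<And>r y. r \<in> {0..T} \<Longrightarrow> dl \<le> survival r y"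
    and t: "t \<in> {0..T}" and \<xi>: "\<xi> \<in> configs N"
  shows "norm2 (\<lambda>x. FV_mean q N t \<xi> x - Tt q t (emp N \<xi>) x)
    \<le> real CARD('a) * T * (2 * rate_bound / dl + 4 * real CARD('a) * rate_bound / dl\<^sup>2) / (real N - 1)"
proof -
  have "norm2 (\<lambda>x. FV_mean q N t \<xi> x - Tt q t (emp N \<xi>) x)
      \<le> (\<Sum>x\<in>UNIV. \<bar>FV_mean q N t \<xi> x - Tt q t (emp N \<xi>) x\<bar>)"
    unfolding norm2_def using L2_set_le_sum_abs[unfolded L2_set_def] .
  also have "\<dots> \<le> (\<Sum>x\<in>(UNIV::'a set).
      T * ((2 * rate_bound / dl + 4 * real CARD('a) * rate_bound / dl\<^sup>2) / (real N - 1)))"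
    by (intro sum_mono abs_FV_mean_minus_Tt_le[OF dl floor t \<xi>])
  finally show ?thesis by simp
qed

end

lemma eventually_div_pred_lt:
  fixes C \<epsilon> :: real
  assumes "\<epsilon> > 0"
  shows "\<exists>N0\<ge>2. \<forall>N\<ge>N0. C / (real N - 1) < \<epsilon>"
proof (intro exI conjI allI impI)
  let ?N0 = "nat \<lceil>\<bar>C\<bar> / \<epsilon>\<rceil> + 2"
  show "2 \<le> ?N0" by simp
  fix N :: nat
  assume "?N0 \<le> N"
  moreover have "\<bar>C\<bar> / \<epsilon> \<le> real (nat \<lceil>\<bar>C\<bar> / \<epsilon>\<rceil>)" by linarith
  ultimately have "\<bar>C\<bar> / \<epsilon> < real N - 1" by linarith
  then have "\<bar>C\<bar> < \<epsilon> * (real N - 1)" using assms by (simp add: divide_less_eq mult.commute)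
  moreover have "real N - 1 > 0" using \<open>?N0 \<le> N\<close> by linarith
  ultimately show "C / (real N - 1) < \<epsilon>" by (simp add: divide_less_eq mult.commute)
qed

theorem lemma4p1:
  fixes q :: "'a::finite option \<Rightarrow> 'a option \<Rightarrow> real" and T :: real
  assumes "rate_matrix q"
    and "\<forall>y. q None y = 0"
    and "irreducible_on_Lambda q"
    and "T > 0"
  shows "\<forall>\<epsilon>>0. \<exists>N0\<ge>2. \<forall>N\<ge>N0. \<forall>t\<in>{0..T}. \<forall>\<xi>\<in>configs N.
           norm2 (\<lambda>x. FV_mean q N t \<xi> x - Tt q t (emp N \<xi>) x) < \<epsilon>"
proof (intro allI impI)
  interpret killed_chain q using assms(1,2) by unfold_locales
  define dl where "dl = exp (- (Q.diag_bound * T))"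
  define C where "C = real CARD('a) * T * (2 * rate_bound / dl + 4 * real CARD('a) * rate_bound / dl\<^sup>2)"
  have dl: "dl > 0" unfolding dl_def by simp
  have floor: "dl \<le> survival r y" if "r \<in> {0..T}" for r y
    unfolding dl_def using that by (rule survival_ge_exp_horizon)
  fix \<epsilon> :: real
  assume "\<epsilon> > 0"
  then obtain N0 where "N0 \<ge> 2" and N0: "\<And>N. N \<ge> N0 \<Longrightarrow> C / (real N - 1) < \<epsilon>"
    using eventually_div_pred_lt by blast
  show "\<exists>N0\<ge>2. \<forall>N\<ge>N0. \<forall>t\<in>{0..T}. \<forall>\<xi>\<in>configs N.
      norm2 (\<lambda>x. FV_mean q N t \<xi> x - Tt q t (emp N \<xi>) x) < \<epsilon>"
  proof (intro exI[of _ N0] conjI allI impI ballI)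
    fix N t and \<xi> :: "nat \<Rightarrow> 'a"
    assume "N0 \<le> N" and t: "t \<in> {0..T}" and \<xi>: "\<xi> \<in> configs N"
    interpret fleming_viot q N
      using assms(1,2) \<open>N0 \<ge> 2\<close> \<open>N0 \<le> N\<close> by unfold_locales auto
    show "norm2 (\<lambda>x. FV_mean q N t \<xi> x - Tt q t (emp N \<xi>) x) < \<epsilon>"
      using norm2_FV_mean_minus_Tt_le[OF dl floor t \<xi>] N0[OF \<open>N0 \<le> N\<close>] unfolding C_def by linarith
  qed (fact \<open>N0 \<ge> 2\<close>)
qed

end
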